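(* Let $T_1,T_2,\dots,T_{2^n}$ be any enumeration of all subsets of $N=\{1,\dots,n\}$ such that $T_i\subseteq T_j$ implies $i\le j$. Then every $q\in P_n$ can be written as $q=q_1q_2\cdots q_{2^n}$, where for each $j$, $q_j\in P_n$ is a (possibly empty, hence equal to $1$) product of monic commutators each of which has support exactly $T_j$.
   Context: $P_n$ denotes the pure braid group on $n$ strands, generated by elements $p_{a,b}$ for $1\le a<b\le n$ subject to the relations: (A) $p_{a,b}p_{a,c}p_{b,c}=p_{a,c}p_{b,c}p_{a,b}=p_{b,c}p_{a,b}p_{a,c}$ for $1\le a<b<c\le n$; (B) $p_{a,b}p_{c,d}=p_{c,d}p_{a,b}$ and $p_{a,d}p_{b,c}=p_{b,c}p_{a,d}$ for $1\le a<b<c<d\le n$; (C) $p_{a,c}p_{b,c}^{-1}p_{b,d}p_{b,c}=p_{b,c}^{-1}p_{b,d}p_{b,c}p_{a,c}$ for $1\le a<b<c<d\le n$. For $S\subseteq N$, $P_S$ is the subgroup generated by the $p_{a,b}$ with $a,b\in S$. Commutator convention: $[x,y]=x^{-1}y^{-1}xy$. Monic commutators are defined recursively: each $p_{a,b}$ and $p_{a,b}^{-1}$ ($1\le a<b\le n$) is a monic commutator; if $x,y$ are monic commutators and $[x,y]\neq1$, then $[x,y]$ is a monic commutator. The support $\sigma(x)$ of $x\in P_n$ is the intersection of all $S\subseteq N$ such that $x\in P_S$. *)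

theory Defs
  imports Main
begin

text \<open>Generator p_{a,b} is the pair (a,b);
a letter is a generator with a sign (True = p_{a,b}, False = p_{a,b}^{-1}); group elements
are represented by words, with equality in P_n given by the congruence pbeq n.\<close>

type_synonym letter = "(nat \<times> nat) \<times> bool"
type_synonym word = "letter list"

definition valid_gen :: "nat \<Rightarrow> nat \<times> nat \<Rightarrow> bool" where
  "valid_gen n g \<longleftrightarrow> 1 \<le> fst g \<and> fst g < snd g \<and> snd g \<le> n"

definition valid_word :: "nat \<Rightarrow> word \<Rightarrow> bool" where
  "valid_word n w \<longleftrightarrow> (\<forall>l \<in> set w. valid_gen n (fst l))"

definition inv_word :: "word \<Rightarrow> word" where
  "inv_word w = rev (map (\<lambda>(g, s). (g, \<not> s)) w)"

definition pg :: "nat \<Rightarrow> nat \<Rightarrow> word" where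
  "pg a b = [((a, b), True)]"

definition pgi :: "nat \<Rightarrow> nat \<Rightarrow> word" where
  "pgi a b = [((a, b), False)]"

inductive pbeq :: "nat \<Rightarrow> word \<Rightarrow> word \<Rightarrow> bool" for n where
  refl: "pbeq n w w"
| sym: "pbeq n u v \<Longrightarrow> pbeq n v u"
| trans: "pbeq n u v \<Longrightarrow> pbeq n v w \<Longrightarrow> pbeq n u w"
| ctx: "pbeq n u v \<Longrightarrow> pbeq n (x @ u @ y) (x @ v @ y)"
| cancel: "valid_gen n g \<Longrightarrow> pbeq n [(g, s), (g, \<not> s)] []"
| relA1: "1 \<le> a \<Longrightarrow> a < b \<Longrightarrow> b < c \<Longrightarrow> c \<le> n \<Longrightarrow>
    pbeq n (pg a b @ pg a c @ pg b c) (pg a c @ pg b c @ pg a b)"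
| relA2: "1 \<le> a \<Longrightarrow> a < b \<Longrightarrow> b < c \<Longrightarrow> c \<le> n \<Longrightarrow>
    pbeq n (pg a c @ pg b c @ pg a b) (pg b c @ pg a b @ pg a c)"
| relB1: "1 \<le> a \<Longrightarrow> a < b \<Longrightarrow> b < c \<Longrightarrow> c < d \<Longrightarrow> d \<le> n \<Longrightarrow>
    pbeq n (pg a b @ pg c d) (pg c d @ pg a b)"
| relB2: "1 \<le> a \<Longrightarrow> a < b \<Longrightarrow> b < c \<Longrightarrow> c < d \<Longrightarrow> d \<le> n \<Longrightarrow>
    pbeq n (pg a d @ pg b c) (pg b c @ pg a d)"
| relC: "1 \<le> a \<Longrightarrow> a < b \<Longrightarrow> b < c \<Longrightarrow> c < d \<Longrightarrow> d \<le> n \<Longrightarrow>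
    pbeq n (pg a c @ pgi b c @ pg b d @ pg b c) (pgi b c @ pg b d @ pg b c @ pg a c)"

definition comm :: "word \<Rightarrow> word \<Rightarrow> word" where
  "comm x y = inv_word x @ inv_word y @ x @ y"

inductive_set monic :: "nat \<Rightarrow> word set" for n where
  gen_pos: "valid_gen n g \<Longrightarrow> [(g, True)] \<in> monic n"
| gen_neg: "valid_gen n g \<Longrightarrow> [(g, False)] \<in> monic n"
| comm: "x \<in> monic n \<Longrightarrow> y \<in> monic n \<Longrightarrow> \<not> pbeq n (comm x y) [] \<Longrightarrow> comm x y \<in> monic n"

definition in_PS :: "nat \<Rightarrow> nat set \<Rightarrow> word \<Rightarrow> bool" where
  "in_PS n S w \<longleftrightarrow> (\<exists>w'. pbeq n w w' \<and> (\<forall>l \<in> set w'. fst (fst l) \<in> S \<and> snd (fst l) \<in> S))"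

definition supp :: "nat \<Rightarrow> word \<Rightarrow> nat set" where
  "supp n w = \<Inter> {S. S \<subseteq> {1..n} \<and> in_PS n S w}"

end

theory Submission
  imports Defs
begin

(*
  Each generator p_{a,b} is a formal commutator (a bracket expression in generators) whose
  strands are {a,b}. Sweep through the enumeration: for j = 1, 2, ..., move every formal
  commutator whose strands form T_j to the left past those whose strands come later, using
  y x = x y [y,x]. The new commutator [y,x] has at least the strands of y, so by the
  ordering of the enumeration it still comes later, and the sweep terminates.
  Finally, a formal commutator c is either trivial or a monic commutator whose support is
  exactly its set of strands: forgetting a strand of c kills c (an innermost generator
  disappears), whereas forgetting a strand outside S fixes every word over P_S.
*)

declare pbeq.trans [trans]

lemma pbeq_append_left: "pbeq n u v \<Longrightarrow> pbeq n (x @ u) (x @ v)"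
  using pbeq.ctx[of n u v x "[]"] by simp

lemma pbeq_append_right: "pbeq n u v \<Longrightarrow> pbeq n (u @ y) (v @ y)"
  using pbeq.ctx[of n u v "[]" y] by simp

lemma pbeq_append: "pbeq n a b \<Longrightarrow> pbeq n c d \<Longrightarrow> pbeq n (a @ c) (b @ d)"
  by (meson pbeq.trans pbeq_append_left pbeq_append_right)

lemma valid_word_Nil [simp]: "valid_word n []"
  by (simp add: valid_word_def)

lemma valid_word_Cons [simp]: "valid_word n (l # w) \<longleftrightarrow> valid_gen n (fst l) \<and> valid_word n w"
  by (simp add: valid_word_def)

lemma valid_word_append [simp]: "valid_word n (u @ v) \<longleftrightarrow> valid_word n u \<and> valid_word n v"
  by (auto simp: valid_word_def)

lemma valid_word_inv_word [simp]: "valid_word n (inv_word w) \<longleftrightarrow> valid_word n w"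
  by (auto simp: valid_word_def inv_word_def split: prod.splits)

lemma valid_word_concat: "valid_word n (concat ws) \<longleftrightarrow> (\<forall>w\<in>set ws. valid_word n w)"
  by (induction ws) simp_all

lemma inv_word_inv_word [simp]: "inv_word (inv_word w) = w"
  by (induction w) (auto simp: inv_word_def)

lemma pbeq_right_inverse: "valid_word n w \<Longrightarrow> pbeq n (w @ inv_word w) []"
proof (induction w)
  case Nil
  show ?case by (simp add: inv_word_def pbeq.refl)
next
  case (Cons l w)
  obtain g s where l: "l = (g, s)" by fastforce
  have "pbeq n ([l] @ (w @ inv_word w) @ [(g, \<not> s)]) ([l] @ [] @ [(g, \<not> s)])"
    using Cons by (intro pbeq.ctx) simp
  also have "pbeq n \<dots> []"
    using Cons.prems l by (simp add: pbeq.cancel)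
  finally show ?case
    using l by (simp add: inv_word_def)
qed

lemma pbeq_left_inverse: "valid_word n w \<Longrightarrow> pbeq n (inv_word w @ w) []"
  using pbeq_right_inverse[of n "inv_word w"] by simp

lemma pbeq_inv_word_Nil: "valid_word n w \<Longrightarrow> pbeq n w [] \<Longrightarrow> pbeq n (inv_word w) []"
  by (metis append_Nil2 pbeq.sym pbeq.trans pbeq_append_left pbeq_left_inverse)

lemma comm_trivial:
  assumes "valid_word n x" "valid_word n y" and "pbeq n x [] \<or> pbeq n y []"
  shows "pbeq n (comm x y) []"
  using assms(3)
proof
  assume x: "pbeq n x []"
  have "pbeq n (inv_word x @ inv_word y @ x @ y) ([] @ inv_word y @ [] @ y)"
    using assms x by (intro pbeq_append pbeq_inv_word_Nil pbeq.refl)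
  also have "pbeq n \<dots> []"
    using assms by (simp add: pbeq_left_inverse)
  finally show ?thesis
    by (simp add: comm_def)
next
  assume y: "pbeq n y []"
  have "pbeq n (inv_word x @ inv_word y @ x @ y) (inv_word x @ [] @ x @ [])"
    using assms y by (intro pbeq_append pbeq_inv_word_Nil pbeq.refl)
  also have "pbeq n \<dots> []"
    using assms by (simp add: pbeq_left_inverse)
  finally show ?thesis
    by (simp add: comm_def)
qed

lemma pbeq_swap_comm:
  assumes "valid_word n x" "valid_word n y"
  shows "pbeq n (y @ x) (x @ y @ comm y x)"
proof -
  have "pbeq n (x @ (y @ inv_word y) @ inv_word x @ y @ x) (x @ [] @ inv_word x @ y @ x)"
    using assms by (intro pbeq.ctx pbeq_right_inverse)
  also have "pbeq n \<dots> ([] @ [] @ y @ x)"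
    using assms pbeq.ctx[OF pbeq_right_inverse, of n x "[]" "y @ x"] by simp
  finally show ?thesis
    by (simp add: comm_def pbeq.sym)
qed

definition strands :: "word \<Rightarrow> nat set" where
  "strands w = (\<Union>l\<in>set w. {fst (fst l), snd (fst l)})"

lemma strands_append [simp]: "strands (u @ v) = strands u \<union> strands v"
  by (auto simp: strands_def)

lemma strands_inv_word [simp]: "strands (inv_word w) = strands w"
  by (auto simp: strands_def inv_word_def split: prod.splits)

lemma strands_comm [simp]: "strands (comm x y) = strands x \<union> strands y"
  by (auto simp: comm_def)

lemma strands_subset: "valid_word n w \<Longrightarrow> strands w \<subseteq> {1..n}"
  by (auto simp: strands_def valid_word_def valid_gen_def)

text \<open>Deleting every letter involving strand k realises the homomorphism of P_n that
  forgets the k-th strand (without renumbering the remaining strands).\<close>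
definition forget_strand :: "nat \<Rightarrow> word \<Rightarrow> word" where
  "forget_strand k w = filter (\<lambda>l. fst (fst l) \<noteq> k \<and> snd (fst l) \<noteq> k) w"

lemma forget_strand_append [simp]:
  "forget_strand k (u @ v) = forget_strand k u @ forget_strand k v"
  by (simp add: forget_strand_def)

lemma forget_strand_inv_word: "forget_strand k (inv_word w) = inv_word (forget_strand k w)"
  by (induction w) (auto simp: forget_strand_def inv_word_def)

lemma forget_strand_comm:
  "forget_strand k (comm x y) = comm (forget_strand k x) (forget_strand k y)"
  by (simp add: comm_def forget_strand_inv_word)

lemma valid_word_forget_strand: "valid_word n w \<Longrightarrow> valid_word n (forget_strand k w)"
  by (auto simp: valid_word_def forget_strand_def)

lemma forget_strand_id: "k \<notin> strands w \<Longrightarrow> forget_strand k w = w"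
  by (auto simp: forget_strand_def strands_def filter_id_conv)

lemma pbeq_forget_strand: "pbeq n u v \<Longrightarrow> pbeq n (forget_strand k u) (forget_strand k v)"
proof (induction rule: pbeq.induct)
  case (relC a b c d)
  show ?case
  proof (cases "k = d")
    case True
    have bc: "valid_gen n (b, c)"
      using relC by (simp add: valid_gen_def)
    have "pbeq n (pg a c @ pgi b c @ pg b c) (pg a c)"
      using pbeq_append_left[OF pbeq.cancel[OF bc, of False], of "pg a c"]
      by (simp add: pgi_def pg_def)
    also have "pbeq n \<dots> (pgi b c @ pg b c @ pg a c)"
      using pbeq.sym[OF pbeq_append_right[OF pbeq.cancel[OF bc, of False], of "pg a c"]]
      by (simp add: pgi_def pg_def)
    finally show ?thesis
      using True relC by (simp add: forget_strand_def pg_def pgi_def)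
  next
    case False
    then show ?thesis
      using relC pbeq.relC[of a b c d n]
      by (auto simp: forget_strand_def pg_def pgi_def pbeq.refl)
  qed
qed (auto simp: forget_strand_def pg_def pbeq.refl
          intro: pbeq.sym pbeq.trans pbeq.ctx pbeq.cancel
                 pbeq.relA1[unfolded pg_def, simplified] pbeq.relA2[unfolded pg_def, simplified]
                 pbeq.relB1[unfolded pg_def, simplified] pbeq.relB2[unfolded pg_def, simplified])

inductive_set formal_comm :: "nat \<Rightarrow> word set" for n where
  gen: "valid_gen n g \<Longrightarrow> [(g, s)] \<in> formal_comm n"
| comm: "x \<in> formal_comm n \<Longrightarrow> y \<in> formal_comm n \<Longrightarrow> comm x y \<in> formal_comm n"

lemma valid_word_formal_comm: "c \<in> formal_comm n \<Longrightarrow> valid_word n c"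
  by (induction rule: formal_comm.induct) (auto simp: comm_def)

lemma formal_comm_monic: "c \<in> formal_comm n \<Longrightarrow> \<not> pbeq n c [] \<Longrightarrow> c \<in> monic n"
proof (induction rule: formal_comm.induct)
  case (gen g s)
  then show ?case by (cases s) (auto intro: monic.intros)
next
  case (comm x y)
  then show ?case
    using comm_trivial valid_word_formal_comm by (blast intro: monic.comm)
qed

lemma pbeq_forget_strand_formal_comm:
  "c \<in> formal_comm n \<Longrightarrow> k \<in> strands c \<Longrightarrow> pbeq n (forget_strand k c) []"
proof (induction rule: formal_comm.induct)
  case (gen g s)
  then show ?case by (auto simp: strands_def forget_strand_def pbeq.refl)
next
  case (comm x y)
  then show ?case
    using comm_trivial valid_word_forget_strand valid_word_formal_comm
    by (auto simp: forget_strand_comm)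
qed

text \<open>Forgetting a strand outside S fixes every word over P_S.\<close>
lemma supp_eq_strands:
  assumes w: "valid_word n w" "\<not> pbeq n w []"
    and forget: "\<And>k. k \<in> strands w \<Longrightarrow> pbeq n (forget_strand k w) []"
  shows "supp n w = strands w"
proof -
  have "in_PS n (strands w) w"
    unfolding in_PS_def by (auto simp: strands_def intro: pbeq.refl)
  moreover have "strands w \<subseteq> S" if "in_PS n S w" for S
  proof
    fix k assume k: "k \<in> strands w"
    obtain w' where w': "pbeq n w w'" "\<forall>l\<in>set w'. fst (fst l) \<in> S \<and> snd (fst l) \<in> S"
      using \<open>in_PS n S w\<close> unfolding in_PS_def by blast
    show "k \<in> S"
    proof (rule ccontr)
      assume "k \<notin> S"
      then have "k \<notin> strands w'"
        using w'(2) by (auto simp: strands_def)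
      then have "forget_strand k w' = w'"
        by (rule forget_strand_id)
      then have "pbeq n w (forget_strand k w)"
        using w'(1) pbeq_forget_strand[OF w'(1), of k] by (metis pbeq.sym pbeq.trans)
      with forget[OF k] w(2) show False
        by (meson pbeq.trans)
    qed
  qed
  ultimately show ?thesis
    using strands_subset[OF w(1)] unfolding supp_def by blast
qed

lemma supp_formal_comm: "c \<in> formal_comm n \<Longrightarrow> \<not> pbeq n c [] \<Longrightarrow> supp n c = strands c"
  by (simp add: supp_eq_strands valid_word_formal_comm pbeq_forget_strand_formal_comm)

lemma pbeq_commute_past_word:
  assumes valid_H: "\<forall>y\<in>H. valid_word n y" and "valid_word n x"
    and comm_H: "\<And>y. y \<in> H \<Longrightarrow> comm y x \<in> H"
    and "ys \<in> lists H"
  shows "\<exists>ys'\<in>lists H. pbeq n (concat ys @ x) (x @ concat ys')"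
  using assms(4)
proof (induction ys)
  case Nil
  show ?case
    using pbeq.refl[of n x] by (intro bexI[of _ "[]"]) auto
next
  case (Cons y ys)
  then obtain ys' where ys': "ys' \<in> lists H" "pbeq n (concat ys @ x) (x @ concat ys')"
    by auto
  have "pbeq n (y @ concat ys @ x) ((y @ x) @ concat ys')"
    using pbeq_append_left[OF ys'(2)] by simp
  also have "pbeq n \<dots> ((x @ y @ comm y x) @ concat ys')"
    using Cons.hyps valid_H assms(2) by (intro pbeq_append_right pbeq_swap_comm) auto
  finally have "pbeq n (concat (y # ys) @ x) (x @ concat (y # comm y x # ys'))"
    by simp
  moreover have "y # comm y x # ys' \<in> lists H"
    using Cons.hyps ys'(1) comm_H by auto
  ultimately show ?case by blast
qed

lemma pbeq_commute_past:
  assumes valid_H: "\<forall>y\<in>H. valid_word n y" and valid_X: "\<forall>x\<in>X. valid_word n x"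
    and comm_H: "\<And>y x. y \<in> H \<Longrightarrow> x \<in> X \<Longrightarrow> comm y x \<in> H"
    and "ys \<in> lists H" "xs \<in> lists X"
  shows "\<exists>ys'\<in>lists H. pbeq n (concat ys @ concat xs) (concat xs @ concat ys')"
  using assms(4,5)
proof (induction xs arbitrary: ys)
  case Nil
  show ?case
    using Nil.prems(1) pbeq.refl[of n "concat ys"] by auto
next
  case (Cons x xs)
  have x: "x \<in> X" and xs: "xs \<in> lists X"
    using Cons.prems(2) by simp_all
  obtain ys1 where ys1: "ys1 \<in> lists H" "pbeq n (concat ys @ x) (x @ concat ys1)"
    using pbeq_commute_past_word[OF valid_H _ _ Cons.prems(1)] valid_X comm_H x by blast
  obtain ys2 where ys2: "ys2 \<in> lists H" "pbeq n (concat ys1 @ concat xs) (concat xs @ concat ys2)"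
    using Cons.IH[OF ys1(1) xs] by blast
  have "pbeq n ((concat ys @ x) @ concat xs) ((x @ concat ys1) @ concat xs)"
    using ys1(2) by (rule pbeq_append_right)
  also have "pbeq n \<dots> (x @ concat xs @ concat ys2)"
    using pbeq_append_left[OF ys2(2)] by simp
  finally show ?case
    using ys2(1) by auto
qed

text \<open>The rank r stands for the map sending S to the index j with T j = S; only its
  monotonicity is used.\<close>
context
  fixes n :: nat and r :: "nat set \<Rightarrow> nat"
  assumes rank_mono: "mono_on (Pow {1..n}) r"
begin

lemma rank_strands_le: "valid_word n w \<Longrightarrow> r (strands w) \<le> r {1..n}"
  using strands_subset by (blast intro: mono_onD[OF rank_mono])

lemma rank_strands_comm_ge:
  assumes "valid_word n x" "valid_word n y"
  shows "r (strands y) \<le> r (strands (comm y x))"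
proof -
  have "strands (comm y x) \<subseteq> {1..n}"
    using assms by (intro strands_subset) (simp add: comm_def)
  then show ?thesis
    by (intro mono_onD[OF rank_mono]) auto
qed

text \<open>Moving a commutator of higher rank to the right past one of rank j creates only
  commutators of higher rank, because the rank is monotone in the support.\<close>
lemma collect_rank_to_front:
  assumes "cs \<in> lists (formal_comm n)" "\<forall>c\<in>set cs. j \<le> r (strands c)"
  shows "\<exists>A B. A \<in> lists {c \<in> formal_comm n. r (strands c) = j} \<and>
           B \<in> lists {c \<in> formal_comm n. j < r (strands c)} \<and>
           pbeq n (concat cs) (concat A @ concat B)"
  using assms
proof (induction cs)
  case Nil
  show ?case
    by (intro exI[of _ "[]"]) (simp add: pbeq.refl)
next
  case (Cons c cs)
  then obtain A B where A: "A \<in> lists {c \<in> formal_comm n. r (strands c) = j}"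
    and B: "B \<in> lists {c \<in> formal_comm n. j < r (strands c)}"
    and cs: "pbeq n (concat cs) (concat A @ concat B)"
    by auto
  have c: "c \<in> formal_comm n"
    using Cons.hyps by simp
  have c_cs: "pbeq n (concat (c # cs)) (c @ concat A @ concat B)"
    using pbeq_append_left[OF cs] by simp
  show ?case
  proof (cases "r (strands c) = j")
    case True
    then have "c # A \<in> lists {c \<in> formal_comm n. r (strands c) = j}"
      using c A by simp
    with B c_cs show ?thesis
      by (intro exI[of _ "c # A"] exI[of _ B]) simp
  next
    case False
    let ?H = "{c \<in> formal_comm n. j < r (strands c)}"
    have "j \<le> r (strands c)"
      using Cons.prems by simp
    with False c have c_H: "[c] \<in> lists ?H"
      by simp
    have comm_H: "comm y x \<in> ?H" if "y \<in> ?H" "x \<in> formal_comm n" for y x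
      using that rank_strands_comm_ge[of x y] valid_word_formal_comm
      by (auto intro: formal_comm.comm order.strict_trans2)
    have "A \<in> lists (formal_comm n)"
      using A by auto
    moreover have "\<forall>y\<in>?H. valid_word n y" "\<forall>x\<in>formal_comm n. valid_word n x"
      using valid_word_formal_comm by auto
    ultimately obtain ys where ys: "ys \<in> lists ?H" "pbeq n (concat [c] @ concat A) (concat A @ concat ys)"
      using pbeq_commute_past[OF _ _ comm_H c_H] by blast
    have "pbeq n (c @ concat A @ concat B) (concat A @ concat (ys @ B))"
      using pbeq_append_right[OF ys(2)] by simp
    with c_cs have "pbeq n (concat (c # cs)) (concat A @ concat (ys @ B))"
      by (rule pbeq.trans)
    then show ?thesis
      using A B ys(1) by (intro exI[of _ A] exI[of _ "ys @ B"]) auto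
  qed
qed

lemma collect_by_rank:
  assumes "r {1..n} < m" "cs \<in> lists (formal_comm n)" "\<forall>c\<in>set cs. j \<le> r (strands c)"
  shows "\<exists>A. pbeq n (concat cs) (concat (map (concat \<circ> A) [j..<m])) \<and>
           (\<forall>i. A i \<in> lists {c \<in> formal_comm n. r (strands c) = i})"
  using assms(2,3)
proof (induction "m - j" arbitrary: j cs)
  case 0
  have "c \<notin> set cs" for c
  proof
    assume "c \<in> set cs"
    then have "j \<le> r (strands c)" "r (strands c) \<le> r {1..n}"
      using "0.prems" rank_strands_le valid_word_formal_comm by auto
    with "0.hyps" assms(1) show False
      by linarith
  qed
  then have "cs = []"
    by (cases cs) auto
  then show ?case
    using "0.hyps" by (intro exI[of _ "\<lambda>_. []"]) (simp add: pbeq.refl)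
next
  case (Suc k)
  obtain A0 B where A0: "A0 \<in> lists {c \<in> formal_comm n. r (strands c) = j}"
    and B: "B \<in> lists {c \<in> formal_comm n. j < r (strands c)}"
    and cs: "pbeq n (concat cs) (concat A0 @ concat B)"
    using collect_rank_to_front Suc.prems by blast
  obtain A where A: "pbeq n (concat B) (concat (map (concat \<circ> A) [Suc j..<m]))"
    "\<forall>i. A i \<in> lists {c \<in> formal_comm n. r (strands c) = i}"
  proof -
    have "k = m - Suc j"
      using Suc.hyps(2) by arith
    moreover have "B \<in> lists (formal_comm n)" "\<forall>c\<in>set B. Suc j \<le> r (strands c)"
      using B by auto
    ultimately show ?thesis
      using Suc.hyps(1) that by blast
  qed
  have "[j..<m] = j # [Suc j..<m]"
    using Suc.hyps(2) by (simp add: upt_conv_Cons)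
  moreover have "map (concat \<circ> A(j := A0)) [Suc j..<m] = map (concat \<circ> A) [Suc j..<m]"
    by (rule map_cong) auto
  ultimately have blocks: "concat (map (concat \<circ> A(j := A0)) [j..<m]) =
      concat A0 @ concat (map (concat \<circ> A) [Suc j..<m])"
    by (simp only: list.map concat.simps(2) comp_apply fun_upd_same)
  have "pbeq n (concat cs) (concat A0 @ concat (map (concat \<circ> A) [Suc j..<m]))"
    using cs pbeq_append_left[OF A(1)] by (rule pbeq.trans)
  then have "pbeq n (concat cs) (concat (map (concat \<circ> A(j := A0)) [j..<m]))"
    by (simp only: blocks)
  moreover have "\<forall>i. (A(j := A0)) i \<in> lists {c \<in> formal_comm n. r (strands c) = i}"
    using A(2) A0 by simp
  ultimately show ?case
    by blast
qed

end

lemma pbeq_concat_filter_nontrivial: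
  "pbeq n (concat cs) (concat (filter (\<lambda>c. \<not> pbeq n c []) cs))"
proof (induction cs)
  case Nil
  show ?case by (simp add: pbeq.refl)
next
  case (Cons c cs)
  show ?case
  proof (cases "pbeq n c []")
    case True
    then have "pbeq n (c @ concat cs) ([] @ concat (filter (\<lambda>c. \<not> pbeq n c []) cs))"
      using Cons.IH by (rule pbeq_append)
    with True show ?thesis by simp
  next
    case False
    then show ?thesis
      using pbeq_append_left[OF Cons.IH] by simp
  qed
qed

lemma product_of_monic_with_support:
  assumes "cs \<in> lists {c \<in> formal_comm n. strands c = S}"
  shows "\<exists>ms. set ms \<subseteq> monic n \<and> (\<forall>c\<in>set ms. supp n c = S) \<and>
               pbeq n (concat cs) (concat ms)"
proof (intro exI conjI)
  let ?ms = "filter (\<lambda>c. \<not> pbeq n c []) cs"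
  show "set ?ms \<subseteq> monic n"
    using assms formal_comm_monic by auto
  show "\<forall>c\<in>set ?ms. supp n c = S"
    using assms supp_formal_comm by auto
  show "pbeq n (concat cs) (concat ?ms)"
    by (rule pbeq_concat_filter_nontrivial)
qed

lemma map_singleton_formal_comm:
  assumes "valid_word n q"
  shows "map (\<lambda>l. [l]) q \<in> lists (formal_comm n)"
proof -
  have "[l] \<in> formal_comm n" if "l \<in> set q" for l
    using formal_comm.gen[of n "fst l" "snd l"] assms that by (simp add: valid_word_def)
  then show ?thesis by auto
qed

lemma mono_on_inv_into_linear_extension:
  assumes enum: "bij_betw T I (Pow N)"
    and order: "\<forall>i\<in>I. \<forall>j\<in>I. T i \<subseteq> T j \<longrightarrow> i \<le> j"
  shows "mono_on (Pow N) (inv_into I T)"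
proof (rule mono_onI)
  fix S S' assume "S \<in> Pow N" "S' \<in> Pow N" "S \<subseteq> S'"
  then show "inv_into I T S \<le> inv_into I T S'"
    using order bij_betw_inv_into_right[OF enum] bij_betwE[OF bij_betw_inv_into[OF enum]]
    by metis
qed

lemma collect_by_enumeration:
  assumes enum: "bij_betw T {1..m} (Pow {1..n})"
    and order: "\<forall>i\<in>{1..m}. \<forall>j\<in>{1..m}. T i \<subseteq> T j \<longrightarrow> i \<le> j"
    and q: "valid_word n q"
  shows "\<exists>A. pbeq n q (concat (map (concat \<circ> A) [1..<m + 1])) \<and>
           (\<forall>j. A j \<in> lists {c \<in> formal_comm n. strands c = T j})"
proof -
  let ?r = "inv_into {1..m} T"
  have T_r: "T (?r S) = S" and r_range: "?r S \<in> {1..m}" if "S \<subseteq> {1..n}" for S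
    using that bij_betw_inv_into_right[OF enum] bij_betwE[OF bij_betw_inv_into[OF enum]] by auto
  have letters: "map (\<lambda>l. [l]) q \<in> lists (formal_comm n)"
    using q by (rule map_singleton_formal_comm)
  have "1 \<le> ?r (strands c)" if "c \<in> set (map (\<lambda>l. [l]) q)" for c
    using that letters r_range strands_subset valid_word_formal_comm by fastforce
  moreover have "?r {1..n} < m + 1"
    using r_range[of "{1..n}"] by simp
  ultimately obtain A
    where A: "pbeq n (concat (map (\<lambda>l. [l]) q)) (concat (map (concat \<circ> A) [1..<m + 1]))"
    and ranks: "\<forall>i. A i \<in> lists {c \<in> formal_comm n. ?r (strands c) = i}"
    using collect_by_rank[OF mono_on_inv_into_linear_extension[OF enum order] _ letters] by blast
  have "A j \<in> lists {c \<in> formal_comm n. strands c = T j}" for j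
    using ranks T_r strands_subset valid_word_formal_comm by fastforce
  moreover have "concat (map (\<lambda>l. [l]) q) = q"
    by (simp add: concat_map_singleton)
  ultimately show ?thesis
    using A by (intro exI[of _ A]) simp
qed

theorem mainTheorem10:
  fixes n :: nat and T :: "nat \<Rightarrow> nat set"
  assumes enum: "bij_betw T {1..2^n} (Pow {1..n})"
    and order: "\<forall>i\<in>{1..2^n}. \<forall>j\<in>{1..2^n}. T i \<subseteq> T j \<longrightarrow> i \<le> j"
  shows "\<forall>q. valid_word n q \<longrightarrow>
    (\<exists>Q :: nat \<Rightarrow> word.
        pbeq n q (concat (map Q [1..<2^n + 1])) \<and>
        (\<forall>j\<in>{1..2^n}. valid_word n (Q j) \<and>
           (\<exists>cs. set cs \<subseteq> monic n \<and> (\<forall>c\<in>set cs. supp n c = T j)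
                 \<and> pbeq n (Q j) (concat cs))))"
proof (intro allI impI, goal_cases)
  case (1 q)
  then obtain A where A: "pbeq n q (concat (map (concat \<circ> A) [1..<2^n + 1]))"
    and blocks: "\<And>j. A j \<in> lists {c \<in> formal_comm n. strands c = T j}"
    using collect_by_enumeration[OF enum order] by blast
  show ?case
  proof (intro exI[of _ "concat \<circ> A"] conjI ballI)
    fix j
    show "valid_word n ((concat \<circ> A) j)"
      using blocks[of j] valid_word_formal_comm by (auto simp: valid_word_concat)
    show "\<exists>cs. set cs \<subseteq> monic n \<and> (\<forall>c\<in>set cs. supp n c = T j) \<and>
        pbeq n ((concat \<circ> A) j) (concat cs)"
      using product_of_monic_with_support[OF blocks[of j]] by simp
  qed (fact A)
qed

end
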